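(* Let $m,n$ be positive integers and let $B=(B(i_1,\dots,i_{2m}))_{1\le i_1,\dots,i_{2m}\le 2n}$ change sign when $i_{2s-1}$ and $i_{2s}$ are interchanged, for each $1\le s\le m$. Let $M=(M(i_1,\dots,i_{2m}))_{1\le i_1,\dots,i_{2m}\le 2mn}$ be the fully antisymmetric array (i.e. $M(i_{\tau(1)},\dots,i_{\tau(2m)})=\mathrm{sgn}(\tau)M(i_1,\dots,i_{2m})$ for all $\tau\in\mathfrak{S}_{2m}$) determined by the following values for $i_1<\cdots<i_{2m}$: if there exist $1\le r_1,\dots,r_{2m}\le 2n$ with $i_{2s-1}=2n(s-1)+r_{2s-1}$ and $i_{2s}=2n(s-1)+r_{2s}$ for all $1\le s\le m$, then $M(i_1,\dots,i_{2m})=B(r_1,\dots,r_{2m})$; otherwise $M(i_1,\dots,i_{2m})=0$. Then $\mathrm{Pf}^{[2m]}(B)=\mathrm{BPf}^{[2m]}(M)$.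
   Context: With $\mathfrak{E}_{2n}=\{\sigma\in\mathfrak{S}_{2n}:\sigma(2i-1)<\sigma(2i),\ 1\le i\le n\}$, $\mathrm{Pf}^{[2m]}(B):=\frac{1}{n!}\sum_{\sigma_1,\dots,\sigma_m\in\mathfrak{E}_{2n}}\prod_s\mathrm{sgn}(\sigma_s)\prod_{i=1}^nB(\sigma_1(2i-1),\sigma_1(2i),\dots,\sigma_m(2i-1),\sigma_m(2i))$. Barvinok's hyperpfaffian of a fully antisymmetric array $M$ indexed by $\{1,\dots,2mn\}^{2m}$: with $\mathfrak{E}_{2mn,2m}=\{\sigma\in\mathfrak{S}_{2mn}:\sigma(2m(i-1)+1)<\sigma(2m(i-1)+2)<\cdots<\sigma(2mi),\ 1\le i\le n\}$, $$\mathrm{BPf}^{[2m]}(M):=\frac{1}{n!}\sum_{\sigma\in\mathfrak{E}_{2mn,2m}}\mathrm{sgn}(\sigma)\prod_{i=1}^nM(\sigma(2m(i-1)+1),\dots,\sigma(2mi)).$$ *)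

theory Defs
  imports "HOL-Combinatorics.Permutations"
begin

text \<open>Arrays indexed by tuples (i_1,...,i_k) are modelled as functions on lists
(nat list => 'a); only lists of the right length with entries in the right
range matter. Indices are 1-based as in the paper.\<close>

definition Epairs :: "nat \<Rightarrow> (nat \<Rightarrow> nat) set" where
  "Epairs n = {\<sigma>. \<sigma> permutes {1..2*n} \<and> (\<forall>i\<in>{1..n}. \<sigma> (2*i-1) < \<sigma> (2*i))}"

definition hyperpf :: "nat \<Rightarrow> nat \<Rightarrow> (nat list \<Rightarrow> 'a::field_char_0) \<Rightarrow> 'a" where
  "hyperpf m n B = (1 / fact n) *
     (\<Sum>ss \<in> PiE {1..m} (\<lambda>_. Epairs n).
        (\<Prod>s=1..m. of_int (sign (ss s))) *
        (\<Prod>i=1..n. B (concat (map (\<lambda>s. [ss s (2*i-1), ss s (2*i)]) [1..<m+1]))))"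

definition Eblocks :: "nat \<Rightarrow> nat \<Rightarrow> (nat \<Rightarrow> nat) set" where
  "Eblocks m n = {\<sigma>. \<sigma> permutes {1..2*m*n} \<and>
     (\<forall>i\<in>{1..n}. \<forall>j\<in>{1..<2*m}. \<sigma> (2*m*(i-1)+j) < \<sigma> (2*m*(i-1)+j+1))}"

definition barvinok_hpf :: "nat \<Rightarrow> nat \<Rightarrow> (nat list \<Rightarrow> 'a::field_char_0) \<Rightarrow> 'a" where
  "barvinok_hpf m n M = (1 / fact n) *
     (\<Sum>\<sigma> \<in> Eblocks m n. of_int (sign \<sigma>) *
        (\<Prod>i=1..n. M (map \<sigma> [2*m*(i-1)+1..<2*m*i+1])))"

end

theory Submission
  imports Defs
begin

(*
  Every block of a permutation in Eblocks is increasing, so barvinok_hpf only sees values of M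
  on increasing tuples. Such a value is B r when the s-th pair of the block lies in the s-th
  chunk {2n(s-1)+1..2ns} of the index range, and 0 otherwise; hence only the "chunked"
  permutations contribute. These are exactly the merges of m-tuples of pairings
  (sigma_1, ..., sigma_m), where the merge sends the c-th entry of the s-th pair of block i to
  2n(s-1) + sigma_s(2i-1+c). Merging is a bijection onto the chunked permutations, and it factors
  as a permutation moving the pairs {2k-1, 2k} as units, which is even, followed by the
  block-diagonal permutation diag(sigma_1, ..., sigma_m). So its sign is the product of the signs
  of the sigma_s, and the two sums agree term by term.
*)

section \<open>Permutations assembled from smaller ones\<close>

lemma sign_transpose_comp:
  assumes "permutation p" "a \<noteq> b"
  shows "sign (Transposition.transpose a b \<circ> p) = - sign p"
  using assms by (simp add: sign_compose permutation_swap_id sign_swap_id)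

definition shift_perm :: "nat \<Rightarrow> (nat \<Rightarrow> nat) \<Rightarrow> nat \<Rightarrow> nat" where
  "shift_perm c p y = (if c < y then c + p (y - c) else y)"

lemma shift_perm_id: "shift_perm c id = id"
  by (auto simp: shift_perm_def)

lemma shift_perm_transpose:
  assumes "0 < a" "0 < b"
  shows "shift_perm c (Transposition.transpose a b \<circ> p) =
    Transposition.transpose (c + a) (c + b) \<circ> shift_perm c p"
  using assms by (auto simp: shift_perm_def transpose_def)

lemma shift_perm_permutes_sign:
  assumes "p permutes {1..N}"
  shows "shift_perm c p permutes {c+1..c+N} \<and> sign (shift_perm c p) = sign p"
  using assms finite_atLeastAtMost
proof (induction rule: permutes_induct)
  case id
  show ?case unfolding shift_perm_id by (intro conjI permutes_id refl)
next
  case (swap a b p)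
  let ?t = "Transposition.transpose (c + a) (c + b)"
  have eq: "shift_perm c (Transposition.transpose a b \<circ> p) = ?t \<circ> shift_perm c p"
    using swap.hyps by (intro shift_perm_transpose) auto
  have "?t permutes {c+1..c+N}"
    using swap.hyps by (intro permutes_swap_id) auto
  then have "?t \<circ> shift_perm c p permutes {c+1..c+N}"
    using swap.IH permutes_compose by blast
  moreover have "permutation (shift_perm c p)" "permutation p"
    using swap permutes_imp_permutation[OF finite_atLeastAtMost] by blast+
  then have "sign (?t \<circ> shift_perm c p) = sign (Transposition.transpose a b \<circ> p)"
    using swap by (simp add: sign_transpose_comp)
  ultimately show ?case unfolding eq by blast
qed

fun block_diag_perm :: "nat \<Rightarrow> nat \<Rightarrow> (nat \<Rightarrow> nat \<Rightarrow> nat) \<Rightarrow> nat \<Rightarrow> nat" where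
  "block_diag_perm N 0 ps = id"
| "block_diag_perm N (Suc M) ps = shift_perm (N * M) (ps (Suc M)) \<circ> block_diag_perm N M ps"

lemma block_diag_perm_permutes_sign:
  assumes "\<And>s. s \<in> {1..M} \<Longrightarrow> ps s permutes {1..N}"
  shows "block_diag_perm N M ps permutes {1..N*M} \<and> sign (block_diag_perm N M ps) = (\<Prod>s=1..M. sign (ps s))"
  using assms
proof (induction M)
  case 0
  show ?case unfolding block_diag_perm.simps by (intro conjI permutes_id) (simp add: sign_id)
next
  case (Suc M)
  have sh: "shift_perm (N*M) (ps (Suc M)) permutes {N*M+1..N*M+N}"
     "sign (shift_perm (N*M) (ps (Suc M))) = sign (ps (Suc M))"
    using shift_perm_permutes_sign[OF Suc.prems, of "Suc M"] by auto
  have IH: "block_diag_perm N M ps permutes {1..N*M}" "sign (block_diag_perm N M ps) = (\<Prod>s=1..M. sign (ps s))"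
    using Suc by auto
  have "block_diag_perm N (Suc M) ps permutes {1..N * Suc M}"
    using permutes_compose[OF permutes_subset[OF IH(1)] permutes_subset[OF sh(1)]] by auto
  moreover have "sign (block_diag_perm N (Suc M) ps) = (\<Prod>s=1..Suc M. sign (ps s))"
    using sh IH sign_compose[OF permutes_imp_permutation[OF _ sh(1)] permutes_imp_permutation[OF _ IH(1)]]
    by simp
  ultimately show ?case by blast
qed

lemma block_diag_perm_apply:
  assumes "\<And>s. s \<in> {1..M} \<Longrightarrow> ps s permutes {1..N}" "b < M" "r \<in> {1..N}"
  shows "block_diag_perm N M ps (N*b + r) = N*b + ps (b+1) r"
  using assms
proof (induction M)
  case 0
  then show ?case by simp
next
  case (Suc M)
  have fix_low: "shift_perm (N*M) (ps (Suc M)) y = y" if "y \<le> N*M" for y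
    using that by (simp add: shift_perm_def)
  show ?case
  proof (cases "b < M")
    case True
    have "ps (b+1) r \<in> {1..N}"
      using Suc.prems True permutes_in_image[of "ps (b+1)" "{1..N}" r] by simp
    moreover have "N*(b+1) \<le> N*M"
      using True by (intro mult_le_mono2) simp
    ultimately have "N*b + ps (b+1) r \<le> N*M"
      by simp
    then show ?thesis
      using Suc.IH[OF Suc.prems(1) True Suc.prems(3)] fix_low by simp
  next
    case False
    then have "b = M" using Suc.prems by simp
    moreover have "block_diag_perm N M ps (N*M + r) = N*M + r"
      using block_diag_perm_permutes_sign[of M ps N] Suc.prems by (auto intro!: permutes_not_in)
    ultimately show ?thesis
      using Suc.prems by (simp add: shift_perm_def)
  qed
qed

(* Moves the pair {2k-1, 2k} onto {2 q(k) - 1, 2 q(k)}; no range guard is needed because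
   q fixes 0. *)
definition pair_perm :: "(nat \<Rightarrow> nat) \<Rightarrow> nat \<Rightarrow> nat" where
  "pair_perm q y = 2 * q ((y + 1) div 2) - y mod 2"

lemma pair_perm_apply: "c < 2 \<Longrightarrow> pair_perm q (2*t + c + 1) = 2 * q (t + 1) + c - 1"
  by (auto simp: pair_perm_def less_2_cases_iff)

lemma pair_perm_id: "pair_perm id = id"
  unfolding pair_perm_def fun_eq_iff id_def by presburger

lemma pair_perm_transpose:
  assumes "0 < a" "0 < b"
  shows "pair_perm (Transposition.transpose a b \<circ> q) =
    Transposition.transpose (2*a - 1) (2*b - 1) \<circ> Transposition.transpose (2*a) (2*b) \<circ> pair_perm q"
proof
  fix y
  define x where "x = q ((y + 1) div 2)"
  have even: "Transposition.transpose (2*a - 1) (2*b - 1) (Transposition.transpose (2*a) (2*b) (2*x))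
      = 2 * Transposition.transpose a b x"
    using assms by (simp add: transpose_def) presburger
  have odd: "Transposition.transpose (2*a - 1) (2*b - 1) (Transposition.transpose (2*a) (2*b) (2*x - 1))
      = 2 * Transposition.transpose a b x - 1"
    using assms by (simp add: transpose_def) presburger
  show "pair_perm (Transposition.transpose a b \<circ> q) y =
    (Transposition.transpose (2*a - 1) (2*b - 1) \<circ> Transposition.transpose (2*a) (2*b) \<circ> pair_perm q) y"
    unfolding pair_perm_def comp_apply x_def[symmetric]
    using even odd by (cases "even y") (simp_all add: odd_iff_mod_2_eq_one)
qed

lemma pair_perm_permutes_sign:
  assumes "q permutes {1..N}"
  shows "pair_perm q permutes {1..2*N} \<and> sign (pair_perm q) = 1"
  using assms finite_atLeastAtMost
proof (induction rule: permutes_induct)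
  case id
  show ?case unfolding pair_perm_id by (intro conjI permutes_id sign_id)
next
  case (swap a b q)
  let ?t1 = "Transposition.transpose (2*a - 1) (2*b - 1)"
  let ?t2 = "Transposition.transpose (2*a) (2*b)"
  have eq: "pair_perm (Transposition.transpose a b \<circ> q) = ?t1 \<circ> (?t2 \<circ> pair_perm q)"
    using swap.hyps by (simp add: pair_perm_transpose o_assoc)
  have "?t1 permutes {1..2*N}" "?t2 permutes {1..2*N}"
    using swap.hyps by (auto intro!: permutes_swap_id)
  then have "?t1 \<circ> (?t2 \<circ> pair_perm q) permutes {1..2*N}"
    using swap.IH permutes_compose by blast
  moreover have "permutation (pair_perm q)"
    using swap.IH permutes_imp_permutation[OF finite_atLeastAtMost] by blast
  then have "sign (?t1 \<circ> (?t2 \<circ> pair_perm q)) = 1"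
    using swap by (simp add: sign_transpose_comp permutation_compose permutation_swap_id)
  ultimately show ?case unfolding eq by blast
qed

lemma grid_index_range:
  fixes a b m n :: nat
  assumes "a < n" "b < m"
  shows "m*a + b + 1 \<in> {1..m*n}"
proof -
  have "m*a + b + 1 \<le> m*(a+1)" using assms by simp
  also have "\<dots> \<le> m*n" using assms by (intro mult_le_mono2) simp
  finally show ?thesis by simp
qed

lemma grid_index_cases:
  fixes k m n :: nat
  assumes "k \<in> {1..m*n}"
  obtains a b where "a < n" "b < m" "k = m*a + b + 1"
proof -
  have "0 < m" using assms by (cases m) auto
  then show thesis
    using assms that[of "(k-1) div m" "(k-1) mod m"]
    by (auto simp: less_mult_imp_div_less mult.commute)
qed

definition grid_transpose :: "nat \<Rightarrow> nat \<Rightarrow> nat \<Rightarrow> nat" where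
  "grid_transpose m n k = (if 1 \<le> k \<and> k \<le> m*n then n * ((k-1) mod m) + (k-1) div m + 1 else k)"

lemma grid_transpose_apply: "a < n \<Longrightarrow> b < m \<Longrightarrow> grid_transpose m n (m*a + b + 1) = n*b + a + 1"
  using grid_index_range[of a n b m] by (simp add: grid_transpose_def)

lemma grid_transpose_permutes: "grid_transpose m n permutes {1..m*n}"
proof (rule bij_imp_permutes)
  have left_inv: "grid_transpose n m (grid_transpose m n k) = k"
    and maps_to: "grid_transpose m n k \<in> {1..n*m}" if k: "k \<in> {1..m*n}" for m n k
  proof -
    obtain a b where ab: "a < n" "b < m" "k = m*a + b + 1"
      using k by (rule grid_index_cases)
    then show "grid_transpose n m (grid_transpose m n k) = k"
      by (simp only: grid_transpose_apply)
    show "grid_transpose m n k \<in> {1..n*m}"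
      using ab by (simp only: grid_transpose_apply grid_index_range)
  qed
  show "bij_betw (grid_transpose m n) {1..m*n} {1..m*n}"
  proof (rule bij_betw_byWitness[where f' = "grid_transpose n m"])
    have swap: "{1..n*m} = {1..m*n}" by (simp add: mult.commute)
    show "\<forall>k\<in>{1..m*n}. grid_transpose n m (grid_transpose m n k) = k"
      using left_inv by blast
    show "\<forall>k\<in>{1..m*n}. grid_transpose m n (grid_transpose n m k) = k"
      using left_inv[of _ n m] swap by blast
    show "grid_transpose m n ` {1..m*n} \<subseteq> {1..m*n}"
      using maps_to swap by blast
    show "grid_transpose n m ` {1..m*n} \<subseteq> {1..m*n}"
      using maps_to[of _ n m] swap by blast
  qed
  show "grid_transpose m n k = k" if "k \<notin> {1..m*n}" for k
    using that by (auto simp: grid_transpose_def)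
qed

section \<open>Merging pairings into one block permutation\<close>

lemma Epairs_permutes: "q \<in> Epairs n \<Longrightarrow> q permutes {1..2*n}"
  by (simp add: Epairs_def)

lemma Epairs_less: "q \<in> Epairs n \<Longrightarrow> a < n \<Longrightarrow> q (2*a + 1) < q (2*a + 2)"
  unfolding Epairs_def by (force simp: numeral_2_eq_2)

lemma Eblocks_iff:
  "\<sigma> \<in> Eblocks m n \<longleftrightarrow> \<sigma> permutes {1..2*m*n} \<and>
     (\<forall>a<n. \<forall>j. j + 1 < 2*m \<longrightarrow> \<sigma> (2*m*a + j + 1) < \<sigma> (2*m*a + j + 2))"
proof -
  have "(\<forall>i\<in>{1..n}. \<forall>j\<in>{1..<2*m}. \<sigma> (2*m*(i-1) + j) < \<sigma> (2*m*(i-1) + j + 1)) \<longleftrightarrow>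
      (\<forall>a<n. \<forall>j. j + 1 < 2*m \<longrightarrow> \<sigma> (2*m*a + j + 1) < \<sigma> (2*m*a + j + 2))"
  proof
    assume asc: "\<forall>i\<in>{1..n}. \<forall>j\<in>{1..<2*m}. \<sigma> (2*m*(i-1) + j) < \<sigma> (2*m*(i-1) + j + 1)"
    show "\<forall>a<n. \<forall>j. j + 1 < 2*m \<longrightarrow> \<sigma> (2*m*a + j + 1) < \<sigma> (2*m*a + j + 2)"
    proof (intro allI impI)
      fix a j assume "a < n" "j + 1 < 2*m"
      then have "a + 1 \<in> {1..n}" "j + 1 \<in> {1..<2*m}"
        by auto
      then have "\<sigma> (2*m*(a+1-1) + (j+1)) < \<sigma> (2*m*(a+1-1) + (j+1) + 1)"
        using asc by blast
      then show "\<sigma> (2*m*a + j + 1) < \<sigma> (2*m*a + j + 2)"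
        by (simp add: add.assoc)
    qed
  next
    assume asc: "\<forall>a<n. \<forall>j. j + 1 < 2*m \<longrightarrow> \<sigma> (2*m*a + j + 1) < \<sigma> (2*m*a + j + 2)"
    show "\<forall>i\<in>{1..n}. \<forall>j\<in>{1..<2*m}. \<sigma> (2*m*(i-1) + j) < \<sigma> (2*m*(i-1) + j + 1)"
    proof (intro ballI)
      fix i j assume "i \<in> {1..n}" "j \<in> {1..<2*m}"
      then have "i - 1 < n" "j - 1 + 1 < 2*m"
        "2*m*(i-1) + (j-1) + 1 = 2*m*(i-1) + j" "2*m*(i-1) + (j-1) + 2 = 2*m*(i-1) + j + 1"
        by auto
      then show "\<sigma> (2*m*(i-1) + j) < \<sigma> (2*m*(i-1) + j + 1)"
        using asc[rule_format, of "i-1" "j-1"] by simp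
    qed
  qed
  then show ?thesis
    unfolding Eblocks_def by blast
qed

lemma Eblocks_permutes: "\<sigma> \<in> Eblocks m n \<Longrightarrow> \<sigma> permutes {1..2*m*n}"
  by (simp add: Eblocks_iff)

lemma Eblocks_ascending:
  "\<sigma> \<in> Eblocks m n \<Longrightarrow> a < n \<Longrightarrow> j + 1 < 2*m \<Longrightarrow> \<sigma> (2*m*a + j + 1) < \<sigma> (2*m*a + j + 2)"
  by (simp add: Eblocks_iff)

lemma finite_Eblocks: "finite (Eblocks m n)"
  by (rule finite_subset[of _ "{p. p permutes {1..2*m*n}}"]) (auto simp: Eblocks_def finite_permutations)

lemma Eblocks_index_cases:
  fixes p m n :: nat
  assumes "p \<in> {1..2*m*n}"
  obtains a b c where "a < n" "b < m" "c < 2" "p = 2*m*a + 2*b + c + 1"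
proof -
  obtain a j where a: "a < n" "j < 2*m" "p = 2*m*a + j + 1"
    using assms by (rule grid_index_cases)
  obtain b c where "b < m" "c < 2" "j + 1 = 2*b + c + 1"
    using grid_index_cases[of "j + 1" 2 m] a(2) by auto
  then show thesis
    using a by (intro that[of a b c]) auto
qed

lemma Eblocks_block:
  assumes \<sigma>: "\<sigma> \<in> Eblocks m n" and i: "i \<in> {1..n}"
  defines "xs \<equiv> map \<sigma> [2*m*(i-1)+1..<2*m*i+1]"
  shows "length xs = 2*m" "\<And>k. k < 2*m \<Longrightarrow> xs ! k = \<sigma> (2*m*(i-1) + k + 1)"
    "sorted_wrt (<) xs" "set xs \<subseteq> {1..2*m*n}"
proof -
  have block: "2*m*i + 1 = 2*m*(i-1) + 1 + 2*m"
    using i by (cases i) auto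
  show len: "length xs = 2*m"
    unfolding xs_def block by (simp del: upt_Suc)
  show nth: "xs ! k = \<sigma> (2*m*(i-1) + k + 1)" if "k < 2*m" for k
    using that unfolding xs_def block by (simp del: upt_Suc)
  have "xs ! k < xs ! Suc k" if "Suc k < length xs" for k
    using that Eblocks_ascending[OF \<sigma>, of "i-1" k] i by (auto simp: len nth)
  then show "sorted_wrt (<) xs"
    by (simp add: sorted_wrt_iff_nth_Suc_transp)
  show "set xs \<subseteq> {1..2*m*n}"
  proof
    fix y assume "y \<in> set xs"
    then obtain k where k: "k < 2*m" "y = xs ! k"
      by (auto simp: in_set_conv_nth len)
    have "2*m*(i-1) + k + 1 \<in> {1..2*m*n}"
      using grid_index_range[of "i-1" n k "2*m"] k(1) i by auto
    then show "y \<in> {1..2*m*n}"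
      using permutes_in_image[OF Eblocks_permutes[OF \<sigma>]] k nth by simp
  qed
qed

definition merge_perms :: "nat \<Rightarrow> nat \<Rightarrow> (nat \<Rightarrow> nat \<Rightarrow> nat) \<Rightarrow> nat \<Rightarrow> nat" where
  "merge_perms m n ss = block_diag_perm (2*n) m ss \<circ> pair_perm (grid_transpose m n)"

lemma merge_perms_permutes_sign:
  assumes "\<And>s. s \<in> {1..m} \<Longrightarrow> ss s permutes {1..2*n}"
  shows "merge_perms m n ss permutes {1..2*m*n} \<and> sign (merge_perms m n ss) = (\<Prod>s=1..m. sign (ss s))"
proof -
  have B: "block_diag_perm (2*n) m ss permutes {1..2*m*n}"
    "sign (block_diag_perm (2*n) m ss) = (\<Prod>s=1..m. sign (ss s))"
    using block_diag_perm_permutes_sign[OF assms] by (auto simp: ac_simps)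
  have P: "pair_perm (grid_transpose m n) permutes {1..2*m*n}" "sign (pair_perm (grid_transpose m n)) = 1"
    using pair_perm_permutes_sign[OF grid_transpose_permutes] by (auto simp: ac_simps)
  show ?thesis
    unfolding merge_perms_def
    using permutes_compose[OF P(1) B(1)] B(2) P(2)
      sign_compose[OF permutes_imp_permutation[OF _ B(1)] permutes_imp_permutation[OF _ P(1)]]
    by simp
qed

lemma merge_perms_apply:
  assumes "\<And>s. s \<in> {1..m} \<Longrightarrow> ss s permutes {1..2*n}" "a < n" "b < m" "c < 2"
  shows "merge_perms m n ss (2*m*a + 2*b + c + 1) = 2*n*b + ss (b+1) (2*a + c + 1)"
proof -
  have "pair_perm (grid_transpose m n) (2*(m*a + b) + c + 1) = 2 * (n*b + a + 1) + c - 1"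
    unfolding pair_perm_apply[OF assms(4)] grid_transpose_apply[OF assms(2,3)] ..
  then have "pair_perm (grid_transpose m n) (2*m*a + 2*b + c + 1) = 2*n*b + (2*a + c + 1)"
    by (simp add: algebra_simps)
  moreover have "2*a + c + 1 \<in> {1..2*n}"
    using assms by simp
  then have "block_diag_perm (2*n) m ss (2*n*b + (2*a + c + 1)) = 2*n*b + ss (b+1) (2*a + c + 1)"
    using assms by (intro block_diag_perm_apply) auto
  ultimately show ?thesis
    by (simp add: merge_perms_def)
qed

definition Eblocks_chunked :: "nat \<Rightarrow> nat \<Rightarrow> (nat \<Rightarrow> nat) set" where
  "Eblocks_chunked m n = {\<sigma> \<in> Eblocks m n.
     \<forall>a<n. \<forall>b<m. \<forall>c<2. \<sigma> (2*m*a + 2*b + c + 1) \<in> {2*n*b<..2*n*b + 2*n}}"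

lemma Eblocks_chunked_subset: "Eblocks_chunked m n \<subseteq> Eblocks m n"
  by (auto simp: Eblocks_chunked_def)

lemma Eblocks_chunkedD:
  assumes "\<sigma> \<in> Eblocks_chunked m n" "a < n" "b < m" "c < 2"
  shows "\<sigma> (2*m*a + 2*b + c + 1) \<in> {2*n*b<..2*n*b + 2*n}"
  using assms unfolding Eblocks_chunked_def by blast

lemma merge_perms_in_Eblocks_chunked:
  assumes ss: "ss \<in> PiE {1..m} (\<lambda>_. Epairs n)"
  shows "merge_perms m n ss \<in> Eblocks_chunked m n"
proof -
  let ?\<sigma> = "merge_perms m n ss"
  have perms: "\<And>s. s \<in> {1..m} \<Longrightarrow> ss s permutes {1..2*n}"
    using Epairs_permutes[OF PiE_mem[OF ss]] by blast
  have val: "?\<sigma> (2*m*a + 2*b + c + 1) = 2*n*b + ss (b+1) (2*a + c + 1)"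
    and chunk: "ss (b+1) (2*a + c + 1) \<in> {1..2*n}" if "a < n" "b < m" "c < 2" for a b c
    using merge_perms_apply[of m ss n a b c] perms permutes_in_image[OF perms[of "b+1"]] that by auto
  have asc: "?\<sigma> (2*m*a + j + 1) < ?\<sigma> (2*m*a + j + 2)" if a: "a < n" and j: "j + 1 < 2*m" for a j
  proof -
    obtain b c where bc: "b < m" "c < 2" "j = 2*b + c"
      using grid_index_cases[of "j + 1" 2 m] j by auto
    show ?thesis
    proof (cases "c = 0")
      case True
      then show ?thesis
        using val[OF a bc(1), of 0] val[OF a bc(1), of 1] Epairs_less[OF PiE_mem[OF ss] a, of "b+1"] bc
        by (simp add: add.assoc)
    next
      case False
      then have b1: "b + 1 < m" and "c = 1" using bc j by auto
      then show ?thesis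
        using val[OF a bc(1), of 1] val[OF a b1, of 0] chunk[OF a bc(1), of 1] chunk[OF a b1, of 0] bc
        by (simp add: algebra_simps)
    qed
  qed
  have "?\<sigma> permutes {1..2*m*n}"
    using merge_perms_permutes_sign[of m ss n] perms by blast
  then have "?\<sigma> \<in> Eblocks m n"
    unfolding Eblocks_iff using asc by blast
  moreover have "?\<sigma> (2*m*a + 2*b + c + 1) \<in> {2*n*b<..2*n*b + 2*n}" if "a < n" "b < m" "c < 2" for a b c
    using val[OF that] chunk[OF that] by auto
  ultimately show ?thesis
    unfolding Eblocks_chunked_def by blast
qed

definition split_perm :: "nat \<Rightarrow> nat \<Rightarrow> (nat \<Rightarrow> nat) \<Rightarrow> nat \<Rightarrow> nat \<Rightarrow> nat" where
  "split_perm m n \<sigma> = (\<lambda>s\<in>{1..m}. \<lambda>k. if k \<in> {1..2*n}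
     then \<sigma> (2*m*((k-1) div 2) + 2*(s-1) + (k-1) mod 2 + 1) - 2*n*(s-1) else k)"

lemma split_perm_apply:
  assumes "b < m" "a < n" "c < 2"
  shows "split_perm m n \<sigma> (b+1) (2*a + c + 1) = \<sigma> (2*m*a + 2*b + c + 1) - 2*n*b"
proof -
  have "2*a + c + 1 \<in> {1..2*n}" "(2*a + c + 1 - 1) div 2 = a" "(2*a + c + 1 - 1) mod 2 = c"
    using assms by auto
  then show ?thesis
    using assms(1) by (simp add: split_perm_def)
qed

lemma split_perm_permutes:
  assumes \<sigma>: "\<sigma> \<in> Eblocks_chunked m n" and b: "b < m"
  shows "split_perm m n \<sigma> (b+1) permutes {1..2*n}"
proof -
  let ?f = "split_perm m n \<sigma> (b+1)"
  have chunk: "\<sigma> (2*m*a + 2*b + c + 1) \<in> {2*n*b<..2*n*b + 2*n}" if "a < n" "c < 2" for a c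
    using Eblocks_chunkedD[OF \<sigma> that(1) b that(2)] .
  have val: "?f (2*a + c + 1) = \<sigma> (2*m*a + 2*b + c + 1) - 2*n*b" if "a < n" "c < 2" for a c
    using split_perm_apply[OF b that] .
  have maps: "?f ` {1..2*n} \<subseteq> {1..2*n}"
  proof
    fix y assume "y \<in> ?f ` {1..2*n}"
    then obtain k where k: "k \<in> {1..2*n}" "y = ?f k"
      by blast
    obtain a c where "a < n" "c < 2" "k = 2*a + c + 1"
      using k(1) by (rule grid_index_cases)
    then show "y \<in> {1..2*n}"
      using val chunk k(2) by fastforce
  qed
  have "inj_on ?f {1..2*n}"
  proof (rule inj_onI)
    fix k k' assume k: "k \<in> {1..2*n}" and k': "k' \<in> {1..2*n}" and eq: "?f k = ?f k'"
    obtain a c where ac: "a < n" "c < 2" "k = 2*a + c + 1"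
      using k by (rule grid_index_cases)
    obtain a' c' where ac': "a' < n" "c' < 2" "k' = 2*a' + c' + 1"
      using k' by (rule grid_index_cases)
    have "\<sigma> (2*m*a + 2*b + c + 1) = \<sigma> (2*m*a' + 2*b + c' + 1)"
      using eq val[OF ac(1,2)] val[OF ac'(1,2)] chunk[OF ac(1,2)] chunk[OF ac'(1,2)] ac(3) ac'(3)
      by auto
    moreover have "inj \<sigma>"
      using \<sigma> Eblocks_chunked_subset by (blast intro: permutes_inj Eblocks_permutes)
    ultimately have "2*m*a + c = 2*m*a' + c'"
      by (simp add: inj_eq)
    then have "c + 2*(m*a) = c' + 2*(m*a')"
      by (simp add: ac_simps)
    moreover from arg_cong[OF this, of "\<lambda>x. x mod 2"] have "c = c'"
      using ac(2) ac'(2) by simp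
    ultimately show "k = k'"
      using ac ac' b by simp
  qed
  then have "bij_betw ?f {1..2*n} {1..2*n}"
    using maps by (simp add: bij_betw_def endo_inj_surj)
  moreover have "?f k = k" if "k \<notin> {1..2*n}" for k
    using that b by (auto simp: split_perm_def)
  ultimately show ?thesis
    by (rule bij_imp_permutes)
qed

lemma split_perm_pair_less:
  assumes \<sigma>: "\<sigma> \<in> Eblocks_chunked m n" and b: "b < m" and i: "i \<in> {1..n}"
  shows "split_perm m n \<sigma> (b+1) (2*i - 1) < split_perm m n \<sigma> (b+1) (2*i)"
proof -
  have ia: "i - 1 < n" and odd: "2*(i-1) + 0 + 1 = 2*i - 1" and even: "2*(i-1) + 1 + 1 = 2*i"
    using i by auto
  have "\<sigma> (2*m*(i-1) + 2*b + 0 + 1) < \<sigma> (2*m*(i-1) + 2*b + 1 + 1)"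
    using Eblocks_ascending[of \<sigma> m n "i-1" "2*b"] \<sigma> Eblocks_chunked_subset ia b by (auto simp: add.assoc)
  then show ?thesis
    using split_perm_apply[OF b ia, of 0 \<sigma>] split_perm_apply[OF b ia, of 1 \<sigma>] Eblocks_chunkedD[OF \<sigma> ia b, of 0]
    unfolding odd even by (simp add: less_diff_iff)
qed

lemma split_perm_in_PiE:
  assumes \<sigma>: "\<sigma> \<in> Eblocks_chunked m n"
  shows "split_perm m n \<sigma> \<in> PiE {1..m} (\<lambda>_. Epairs n)"
proof -
  have column: "split_perm m n \<sigma> (b+1) \<in> Epairs n" if "b < m" for b
    using split_perm_permutes[OF \<sigma> that] split_perm_pair_less[OF \<sigma> that] by (simp add: Epairs_def)
  have "split_perm m n \<sigma> s \<in> Epairs n" if "s \<in> {1..m}" for s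
    using column[of "s-1"] that by auto
  moreover have "split_perm m n \<sigma> \<in> extensional {1..m}"
    unfolding split_perm_def by (rule restrict_extensional)
  ultimately show ?thesis
    by (simp add: PiE_iff)
qed

lemma split_merge_perms:
  assumes ss: "ss \<in> PiE {1..m} (\<lambda>_. Epairs n)"
  shows "split_perm m n (merge_perms m n ss) = ss"
proof
  fix s
  have perms: "\<And>s. s \<in> {1..m} \<Longrightarrow> ss s permutes {1..2*n}"
    using Epairs_permutes[OF PiE_mem[OF ss]] by blast
  show "split_perm m n (merge_perms m n ss) s = ss s"
  proof (cases "s \<in> {1..m}")
    case True
    then obtain b where b: "b < m" "s = b + 1"
      by (intro that[of "s - 1"]) auto
    show ?thesis
    proof
      fix k
      show "split_perm m n (merge_perms m n ss) s k = ss s k"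
      proof (cases "k \<in> {1..2*n}")
        case True
        then obtain a c where ac: "a < n" "c < 2" "k = 2*a + c + 1"
          by (rule grid_index_cases)
        have "merge_perms m n ss (2*m*a + 2*b + c + 1) = 2*n*b + ss (b+1) (2*a + c + 1)"
          using perms b ac by (intro merge_perms_apply) auto
        then show ?thesis
          using split_perm_apply[OF b(1) ac(1,2)] ac(3) b(2) by simp
      next
        case False
        have "ss s k = k"
          using perms[OF \<open>s \<in> {1..m}\<close>] False by (rule permutes_not_in)
        moreover have "split_perm m n (merge_perms m n ss) s k = k"
          using \<open>s \<in> {1..m}\<close> False by (auto simp: split_perm_def)
        ultimately show ?thesis by simp
      qed
    qed
  next
    case False
    then have "split_perm m n (merge_perms m n ss) s = undefined"
      unfolding split_perm_def by (simp only: restrict_apply if_False)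
    then show ?thesis
      using PiE_arb[OF ss False] by simp
  qed
qed

lemma merge_split_perm:
  assumes \<sigma>: "\<sigma> \<in> Eblocks_chunked m n"
  shows "merge_perms m n (split_perm m n \<sigma>) = \<sigma>"
proof
  fix p
  have perms: "\<And>s. s \<in> {1..m} \<Longrightarrow> split_perm m n \<sigma> s permutes {1..2*n}"
    using Epairs_permutes[OF PiE_mem[OF split_perm_in_PiE[OF \<sigma>]]] by blast
  have \<sigma>_perm: "\<sigma> permutes {1..2*m*n}"
    using \<sigma> unfolding Eblocks_chunked_def by (blast intro: Eblocks_permutes)
  show "merge_perms m n (split_perm m n \<sigma>) p = \<sigma> p"
  proof (cases "p \<in> {1..2*m*n}")
    case True
    then obtain a b c where abc: "a < n" "b < m" "c < 2" "p = 2*m*a + 2*b + c + 1"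
      by (rule Eblocks_index_cases)
    have "merge_perms m n (split_perm m n \<sigma>) p = 2*n*b + split_perm m n \<sigma> (b+1) (2*a + c + 1)"
      using perms abc by (simp only: merge_perms_apply)
    also have "\<dots> = 2*n*b + (\<sigma> p - 2*n*b)"
      using abc by (simp only: split_perm_apply)
    also have "\<dots> = \<sigma> p"
      using Eblocks_chunkedD[OF \<sigma> abc(1-3)] abc(4) by simp
    finally show ?thesis .
  next
    case False
    have "merge_perms m n (split_perm m n \<sigma>) permutes {1..2*m*n}"
      using merge_perms_permutes_sign[of m "split_perm m n \<sigma>" n] perms by blast
    then show ?thesis
      using permutes_not_in[OF _ False] \<sigma>_perm by metis
  qed
qed

lemma bij_betw_merge_perms:
  "bij_betw (merge_perms m n) (PiE {1..m} (\<lambda>_. Epairs n)) (Eblocks_chunked m n)"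
proof (rule bij_betw_byWitness[where f' = "split_perm m n"])
  show "\<forall>ss\<in>PiE {1..m} (\<lambda>_. Epairs n). split_perm m n (merge_perms m n ss) = ss"
    using split_merge_perms by blast
  show "\<forall>\<sigma>\<in>Eblocks_chunked m n. merge_perms m n (split_perm m n \<sigma>) = \<sigma>"
    using merge_split_perm by blast
  show "merge_perms m n ` PiE {1..m} (\<lambda>_. Epairs n) \<subseteq> Eblocks_chunked m n"
    using merge_perms_in_Eblocks_chunked by blast
  show "split_perm m n ` Eblocks_chunked m n \<subseteq> PiE {1..m} (\<lambda>_. Epairs n)"
    using split_perm_in_PiE by blast
qed

definition chunk_offsets :: "nat \<Rightarrow> nat \<Rightarrow> nat list \<Rightarrow> nat list \<Rightarrow> bool" where
  "chunk_offsets m n i r \<longleftrightarrow>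
     length r = 2*m \<and> set r \<subseteq> {1..2*n} \<and> (\<forall>k<2*m. i ! k = 2*n*(k div 2) + r ! k)"

lemma Eblocks_not_chunked_block:
  assumes "\<sigma> \<in> Eblocks m n" "\<sigma> \<notin> Eblocks_chunked m n"
  obtains i where "i \<in> {1..n}" "\<not> (\<exists>r. chunk_offsets m n (map \<sigma> [2*m*(i-1)+1..<2*m*i+1]) r)"
proof -
  obtain a b c where abc: "a < n" "b < m" "c < 2"
    and outside: "\<sigma> (2*m*a + 2*b + c + 1) \<notin> {2*n*b<..2*n*b + 2*n}"
    using assms unfolding Eblocks_chunked_def by blast
  have i: "a + 1 \<in> {1..n}" and k: "2*b + c < 2*m" "(2*b + c) div 2 = b"
    using abc by auto
  have "\<not> chunk_offsets m n (map \<sigma> [2*m*(a+1-1)+1..<2*m*(a+1)+1]) r" for r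
  proof
    assume "chunk_offsets m n (map \<sigma> [2*m*(a+1-1)+1..<2*m*(a+1)+1]) r"
    then have r: "length r = 2*m" "set r \<subseteq> {1..2*n}"
      and "map \<sigma> [2*m*(a+1-1)+1..<2*m*(a+1)+1] ! (2*b + c) = 2*n*b + r ! (2*b + c)"
      using k unfolding chunk_offsets_def by auto
    then have "\<sigma> (2*m*a + 2*b + c + 1) = 2*n*b + r ! (2*b + c)"
      using Eblocks_block(2)[OF assms(1) i k(1)] by (simp add: add.assoc)
    moreover have "r ! (2*b + c) \<in> set r"
      using r(1) k(1) by simp
    then have "r ! (2*b + c) \<in> {1..2*n}"
      using r(2) by blast
    ultimately show False
      using outside by simp
  qed
  then show thesis
    using that i by blast
qed

lemma length_concat_pairs: "length (concat (map (\<lambda>x. [f x, g x]) xs)) = 2 * length xs"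
  by (induction xs) auto

lemma nth_concat_pairs:
  "b < length xs \<Longrightarrow> c < 2 \<Longrightarrow>
    concat (map (\<lambda>x. [f x, g x]) xs) ! (2*b + c) = (if c = 0 then f else g) (xs ! b)"
proof (induction xs arbitrary: b)
  case Nil
  then show ?case by simp
next
  case (Cons x xs)
  then show ?case
    by (cases b) (auto simp: less_2_cases_iff)
qed

lemma nth_concat_pairs_upt:
  assumes "b < m" "c < 2" "0 < i"
  shows "concat (map (\<lambda>s. [ss s (2*i-1), ss s (2*i)]) [1..<m+1]) ! (2*b + c) = ss (b+1) (2*(i-1) + c + 1)"
proof -
  have "concat (map (\<lambda>s. [ss s (2*i-1), ss s (2*i)]) [1..<m+1]) ! (2*b + c)
      = (if c = 0 then ss (b+1) (2*i-1) else ss (b+1) (2*i))"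
    using nth_concat_pairs[of b "[1..<m+1]" c "\<lambda>s. ss s (2*i-1)" "\<lambda>s. ss s (2*i)"] assms(1,2)
    by (simp del: upt_Suc)
  moreover have "2*(i-1) + 0 + 1 = 2*i - 1" "2*(i-1) + 1 + 1 = 2*i"
    using assms(3) by auto
  ultimately show ?thesis
    using assms(2) by (cases "c = 0") (simp_all only: less_2_cases_iff if_True if_False, auto)
qed

lemma merge_perms_block_chunk_offsets:
  assumes ss: "ss \<in> PiE {1..m} (\<lambda>_. Epairs n)" and i: "i \<in> {1..n}"
  shows "chunk_offsets m n (map (merge_perms m n ss) [2*m*(i-1)+1..<2*m*i+1])
           (concat (map (\<lambda>s. [ss s (2*i-1), ss s (2*i)]) [1..<m+1]))"
proof -
  define r where "r = concat (map (\<lambda>s. [ss s (2*i-1), ss s (2*i)]) [1..<m+1])"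
  have perms: "\<And>s. s \<in> {1..m} \<Longrightarrow> ss s permutes {1..2*n}"
    using Epairs_permutes[OF PiE_mem[OF ss]] by blast
  have len: "length r = 2*m"
    unfolding r_def by (simp add: length_concat_pairs)
  have r_nth: "r ! (2*b + c) = ss (b+1) (2*(i-1) + c + 1)" if "b < m" "c < 2" for b c
    unfolding r_def using i by (intro nth_concat_pairs_upt that) simp
  have r_range: "ss (b+1) (2*(i-1) + c + 1) \<in> {1..2*n}" if "b < m" "c < 2" for b c
  proof -
    have "2*(i-1) + c + 1 \<in> {1..2*n}"
      using that i by auto
    moreover have "ss (b+1) permutes {1..2*n}"
      using perms that by simp
    ultimately show ?thesis
      by (simp only: permutes_in_image)
  qed
  have "r ! k \<in> {1..2*n}" if "k < 2*m" for k
    using r_nth[of "k div 2" "k mod 2"] r_range[of "k div 2" "k mod 2"] that by simp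
  then have "set r \<subseteq> {1..2*n}"
    by (metis in_set_conv_nth len subsetI)
  moreover have "map (merge_perms m n ss) [2*m*(i-1)+1..<2*m*i+1] ! k = 2*n*(k div 2) + r ! k"
    if "k < 2*m" for k
  proof -
    have "map (merge_perms m n ss) [2*m*(i-1)+1..<2*m*i+1] ! k
        = merge_perms m n ss (2*m*(i-1) + 2*(k div 2) + k mod 2 + 1)"
      using Eblocks_block(2)[OF subsetD[OF Eblocks_chunked_subset merge_perms_in_Eblocks_chunked[OF ss]] i that]
      by (simp del: upt_Suc add: add.commute)
    also have "\<dots> = 2*n*(k div 2) + ss (k div 2 + 1) (2*(i-1) + k mod 2 + 1)"
      using perms i that by (intro merge_perms_apply) auto
    finally show ?thesis
      using r_nth[of "k div 2" "k mod 2"] that by simp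
  qed
  ultimately show ?thesis
    unfolding chunk_offsets_def r_def[symmetric] using len by blast
qed

definition barvinok_summand :: "nat \<Rightarrow> nat \<Rightarrow> (nat list \<Rightarrow> 'a::field_char_0) \<Rightarrow> (nat \<Rightarrow> nat) \<Rightarrow> 'a" where
  "barvinok_summand m n M \<sigma> = of_int (sign \<sigma>) * (\<Prod>i=1..n. M (map \<sigma> [2*m*(i-1)+1..<2*m*i+1]))"

definition hyperpf_summand :: "nat \<Rightarrow> nat \<Rightarrow> (nat list \<Rightarrow> 'a::field_char_0) \<Rightarrow> (nat \<Rightarrow> nat \<Rightarrow> nat) \<Rightarrow> 'a" where
  "hyperpf_summand m n B ss = (\<Prod>s=1..m. of_int (sign (ss s))) *
     (\<Prod>i=1..n. B (concat (map (\<lambda>s. [ss s (2*i-1), ss s (2*i)]) [1..<m+1])))"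

lemma barvinok_summand_vanishes:
  assumes zero: "\<And>i. length i = 2*m \<Longrightarrow> sorted_wrt (<) i \<Longrightarrow> set i \<subseteq> {1..2*m*n} \<Longrightarrow>
      \<not> (\<exists>r. chunk_offsets m n i r) \<Longrightarrow> M i = 0"
    and \<sigma>: "\<sigma> \<in> Eblocks m n - Eblocks_chunked m n"
  shows "barvinok_summand m n M \<sigma> = 0"
proof -
  obtain i where i: "i \<in> {1..n}" "\<not> (\<exists>r. chunk_offsets m n (map \<sigma> [2*m*(i-1)+1..<2*m*i+1]) r)"
    using \<sigma> by (auto elim: Eblocks_not_chunked_block)
  have "\<sigma> \<in> Eblocks m n"
    using \<sigma> by blast
  then have "M (map \<sigma> [2*m*(i-1)+1..<2*m*i+1]) = 0"
    using zero[OF Eblocks_block(1,3,4)[OF _ i(1)] i(2)] by blast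
  then have "(\<Prod>j=1..n. M (map \<sigma> [2*m*(j-1)+1..<2*m*j+1])) = 0"
    using i(1) by (intro prod_zero finite_atLeastAtMost) blast
  then show ?thesis
    unfolding barvinok_summand_def by (simp only: mult_zero_right)
qed

lemma barvinok_summand_merge_perms:
  assumes entry: "\<And>i r. length i = 2*m \<Longrightarrow> sorted_wrt (<) i \<Longrightarrow> set i \<subseteq> {1..2*m*n} \<Longrightarrow>
      chunk_offsets m n i r \<Longrightarrow> M i = B r"
    and ss: "ss \<in> PiE {1..m} (\<lambda>_. Epairs n)"
  shows "barvinok_summand m n M (merge_perms m n ss) = hyperpf_summand m n B ss"
proof -
  have \<sigma>: "merge_perms m n ss \<in> Eblocks m n"
    using merge_perms_in_Eblocks_chunked[OF ss] Eblocks_chunked_subset by blast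
  have "M (map (merge_perms m n ss) [2*m*(i-1)+1..<2*m*i+1])
      = B (concat (map (\<lambda>s. [ss s (2*i-1), ss s (2*i)]) [1..<m+1]))" if "i \<in> {1..n}" for i
    using entry[OF Eblocks_block(1,3,4)[OF \<sigma> that] merge_perms_block_chunk_offsets[OF ss that]] .
  moreover have "sign (merge_perms m n ss) = (\<Prod>s=1..m. sign (ss s))"
    using merge_perms_permutes_sign[of m ss n] Epairs_permutes[OF PiE_mem[OF ss]] by blast
  ultimately show ?thesis
    unfolding barvinok_summand_def hyperpf_summand_def by (simp add: of_int_prod)
qed

theorem proposition6p1:
  fixes m n :: nat and B M :: "nat list \<Rightarrow> 'a::field_char_0"
  assumes "m > 0" and "n > 0"
    and B_anti: "\<forall>xs s. length xs = 2*m \<and> set xs \<subseteq> {1..2*n} \<and> s \<in> {1..m} \<longrightarrow>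
          B (xs[2*s-2 := xs!(2*s-1), 2*s-1 := xs!(2*s-2)]) = - B xs"
    and M_anti: "\<forall>xs \<tau>. length xs = 2*m \<and> set xs \<subseteq> {1..2*m*n} \<and> \<tau> permutes {0..<2*m} \<longrightarrow>
          M (map (\<lambda>k. xs ! \<tau> k) [0..<2*m]) = of_int (sign \<tau>) * M xs"
    and M_blk: "\<forall>i r. length i = 2*m \<and> sorted_wrt (<) i \<and> set i \<subseteq> {1..2*m*n}
          \<and> length r = 2*m \<and> set r \<subseteq> {1..2*n}
          \<and> (\<forall>k<2*m. i ! k = 2*n*(k div 2) + r ! k) \<longrightarrow> M i = B r"
    and M_zero: "\<forall>i. length i = 2*m \<and> sorted_wrt (<) i \<and> set i \<subseteq> {1..2*m*n}
          \<and> \<not> (\<exists>r. length r = 2*m \<and> set r \<subseteq> {1..2*n}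
                  \<and> (\<forall>k<2*m. i ! k = 2*n*(k div 2) + r ! k)) \<longrightarrow> M i = 0"
  shows "hyperpf m n B = barvinok_hpf m n M"
proof -
  have M_nonchunk: "M i = 0" if "length i = 2*m" "sorted_wrt (<) i" "set i \<subseteq> {1..2*m*n}"
    "\<not> (\<exists>r. chunk_offsets m n i r)" for i
    using M_zero that unfolding chunk_offsets_def by blast
  have M_chunk: "M i = B r" if "length i = 2*m" "sorted_wrt (<) i" "set i \<subseteq> {1..2*m*n}"
    "chunk_offsets m n i r" for i r
    using M_blk that unfolding chunk_offsets_def by blast
  have "(\<Sum>\<sigma>\<in>Eblocks m n. barvinok_summand m n M \<sigma>) = (\<Sum>\<sigma>\<in>Eblocks_chunked m n. barvinok_summand m n M \<sigma>)"
    using barvinok_summand_vanishes[OF M_nonchunk]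
    by (intro sum.mono_neutral_right finite_Eblocks Eblocks_chunked_subset) auto
  also have "\<dots> = (\<Sum>ss\<in>PiE {1..m} (\<lambda>_. Epairs n). barvinok_summand m n M (merge_perms m n ss))"
    by (rule sum.reindex_bij_betw[OF bij_betw_merge_perms, symmetric])
  also have "\<dots> = (\<Sum>ss\<in>PiE {1..m} (\<lambda>_. Epairs n). hyperpf_summand m n B ss)"
    using barvinok_summand_merge_perms[OF M_chunk] by (rule sum.cong[OF refl])
  finally show ?thesis
    unfolding hyperpf_def barvinok_hpf_def barvinok_summand_def hyperpf_summand_def by simp
qed

end
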